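(* For all $a,b\ge0$, $$\left|(a+1)e^{-a}-(b+1)e^{-b}\right|\ge|a-b|\sqrt{ab}\,e^{-\frac{a+b}{2}}.$$ *)

theory Defs
  imports Complex_Main
begin

end

theory Submission
  imports Defs
begin

(*
  Put m = (a+b)/2 and t = (a-b)/2, so that a = m+t, b = m-t and, for b <= a,
  0 <= t <= m.  Factoring out exp(-m), the claimed inequality becomes

      t * sqrt (m^2 - t^2) <= (m+1) sinh t - t cosh t =: R.

  We show R >= 0 and R^2 - t^2 (m^2 - t^2) >= 0.  The latter expression is a
  quadratic polynomial in m with coefficients depending only on t; it is
  nonnegative because its leading coefficient sinh^2 t - t^2 is nonnegative
  (as sinh t >= t) and its discriminant is nonpositive, which reduces to the
  one-variable inequality (sinh t - t cosh t)^2 + t^4 <= t^2 sinh^2 t.  That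
  inequality is proved by differentiation, again using only sinh t >= t.
*)

lemma sinh_ge_self:
  fixes x :: real
  assumes "0 \<le> x"
  shows "x \<le> sinh x"
  using real_le_x_sinh[OF assms] by (simp add: sinh_field_def exp_minus)

lemma quadratic_nonneg_of_discriminant:
  fixes a b c x :: real
  assumes "0 \<le> a" and "0 \<le> c" and "b\<^sup>2 \<le> a * c"
  shows "0 \<le> a * x\<^sup>2 + 2 * b * x + c"
proof (cases "a = 0")
  case True
  then have "b = 0" using assms(3) by simp
  then show ?thesis using True assms(2) by simp
next
  case False
  then have "0 < a" using assms(1) by simp
  have "a * (a * x\<^sup>2 + 2 * b * x + c) = (a * x + b)\<^sup>2 + (a * c - b\<^sup>2)"
    by (simp add: power2_eq_square algebra_simps)
  also have "\<dots> \<ge> 0" using assms(3) by simp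
  finally show ?thesis using \<open>0 < a\<close> by (simp add: zero_le_mult_iff)
qed

text \<open>The function
  h(t) = 2 t sinh t cosh t - sinh^2 t - t^2 - t^4 vanishes at 0 and has
  derivative 4 t (sinh^2 t - t^2) >= 0.\<close>
lemma sinh_cosh_key_inequality:
  fixes t :: real
  assumes "0 \<le> t"
  shows "(sinh t - t * cosh t)\<^sup>2 + t ^ 4 \<le> t\<^sup>2 * (sinh t)\<^sup>2"
proof -
  define h where "h x = 2 * x * sinh x * cosh x - (sinh x)\<^sup>2 - x\<^sup>2 - x ^ 4" for x :: real
  have "h 0 \<le> h t"
  proof (rule DERIV_nonneg_imp_nondecreasing[OF assms], intro exI conjI)
    fix y :: real
    assume "0 \<le> y"
    show "(h has_real_derivative 4 * y * ((sinh y)\<^sup>2 - y\<^sup>2)) (at y)"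
      unfolding h_def
      by (rule derivative_eq_intros refl | simp)+
         (use cosh_square_eq[of y] in \<open>simp add: power2_eq_square power3_eq_cube; algebra\<close>)
    have "y\<^sup>2 \<le> (sinh y)\<^sup>2"
      using sinh_ge_self[OF \<open>0 \<le> y\<close>] \<open>0 \<le> y\<close> by (intro power_mono) auto
    then show "0 \<le> 4 * y * ((sinh y)\<^sup>2 - y\<^sup>2)" using \<open>0 \<le> y\<close> by simp
  qed
  moreover have "t\<^sup>2 * (sinh t)\<^sup>2 - (sinh t - t * cosh t)\<^sup>2 - t ^ 4 = h t"
    using cosh_square_eq[of t] unfolding h_def by (simp add: power2_eq_square) algebra
  ultimately show ?thesis by (simp add: h_def)
qed

text \<open>The inequality after the substitution a = m + t, b = m - t and
  division by 2 exp(-m).\<close>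
lemma sinh_cosh_bound:
  fixes m t :: real
  assumes "0 \<le> t" and "t \<le> m"
  shows "t * sqrt (m\<^sup>2 - t\<^sup>2) \<le> (m + 1) * sinh t - t * cosh t"
proof -
  define R where "R = (m + 1) * sinh t - t * cosh t"
  define u where "u = sinh t - t * cosh t"
  have sinh_t: "t \<le> sinh t" using sinh_ge_self[OF assms(1)] .
  have R_nonneg: "0 \<le> R"
  proof -
    \<comment> \<open>(1 + t) sinh t - t cosh t = sinh t - t exp(-t) >= t (1 - exp(-t)) >= 0\<close>
    have "t * exp (- t) \<le> t" using assms(1) by (simp add: mult_left_le)
    then have "0 \<le> (1 + t) * sinh t - t * cosh t"
      using sinh_t cosh_minus_sinh[of t] by (simp add: algebra_simps)
    moreover have "0 \<le> (m - t) * sinh t" using assms by simp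
    ultimately show ?thesis by (simp add: R_def algebra_simps)
  qed
  have lead: "0 \<le> (sinh t)\<^sup>2 - t\<^sup>2"
    using sinh_t assms(1) by (simp add: power_mono)
  have discr: "(sinh t * u)\<^sup>2 \<le> ((sinh t)\<^sup>2 - t\<^sup>2) * (u\<^sup>2 + t ^ 4)"
  proof -
    have "0 \<le> t\<^sup>2 * (t\<^sup>2 * (sinh t)\<^sup>2 - u\<^sup>2 - t ^ 4)"
      using sinh_cosh_key_inequality[OF assms(1)] by (simp add: u_def)
    then show ?thesis by (simp add: power2_eq_square power4_eq_xxxx algebra_simps)
  qed
  have "R\<^sup>2 - t\<^sup>2 * (m\<^sup>2 - t\<^sup>2)
        = ((sinh t)\<^sup>2 - t\<^sup>2) * m\<^sup>2 + 2 * (sinh t * u) * m + (u\<^sup>2 + t ^ 4)"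
    by (simp add: R_def u_def power2_eq_square power4_eq_xxxx algebra_simps)
  also have "\<dots> \<ge> 0"
    using lead discr by (intro quadratic_nonneg_of_discriminant) simp_all
  finally have "(t * sqrt (m\<^sup>2 - t\<^sup>2))\<^sup>2 \<le> R\<^sup>2"
    using assms by (simp add: power_mult_distrib)
  then show ?thesis
    using R_nonneg by (simp add: R_def power2_le_iff_abs_le)
qed

lemma ordered_case:
  fixes a b :: real
  assumes "0 \<le> b" and "b \<le> a"
  shows "(a - b) * sqrt (a * b) * exp (- ((a + b) / 2)) \<le> (b + 1) * exp (- b) - (a + 1) * exp (- a)"
proof -
  define m where "m = (a + b) / 2"
  define t where "t = (a - b) / 2"
  have a_eq: "a = m + t" and b_eq: "b = m - t" by (simp_all add: m_def t_def field_simps)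
  have "0 \<le> t" "t \<le> m" using assms by (simp_all add: m_def t_def)
  have "(b + 1) * exp (- b) - (a + 1) * exp (- a)
        = exp (- m) * ((m - t + 1) * exp t - (m + t + 1) * exp (- t))"
    by (simp add: a_eq b_eq algebra_simps flip: exp_add)
  also have "\<dots> = 2 * exp (- m) * ((m + 1) * sinh t - t * cosh t)"
    by (simp add: sinh_field_def cosh_field_def algebra_simps)
  finally have lhs: "(b + 1) * exp (- b) - (a + 1) * exp (- a)
                     = 2 * exp (- m) * ((m + 1) * sinh t - t * cosh t)" .
  have rhs: "(a - b) * sqrt (a * b) * exp (- ((a + b) / 2)) = 2 * exp (- m) * (t * sqrt (m\<^sup>2 - t\<^sup>2))"
    by (simp add: m_def[symmetric] a_eq b_eq power2_eq_square algebra_simps)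
  show ?thesis
    unfolding lhs rhs using sinh_cosh_bound[OF \<open>0 \<le> t\<close> \<open>t \<le> m\<close>] by simp
qed

theorem mainTheorem10:
  fixes a b :: real
  assumes "a \<ge> 0" and "b \<ge> 0"
  shows "\<bar>(a + 1) * exp (- a) - (b + 1) * exp (- b)\<bar> \<ge> \<bar>a - b\<bar> * sqrt (a * b) * exp (- ((a + b) / 2))"
proof (cases "b \<le> a")
  case True
  then show ?thesis using ordered_case[OF assms(2) True] by simp
next
  case False
  then have "a \<le> b" by simp
  from ordered_case[OF assms(1) this] show ?thesis
    using False by (simp add: mult.commute add.commute)
qed

end
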